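(* In any weighted graph on $n$ vertices with $\mathsf{OPT}^{\mathsf{IR}}<\mathsf{OPT}^{\mathsf{stable}}$, there exists a persuasive signaling scheme with at most $n+1$ signals (i.e., $|\Sigma|\le n+1$) whose cost is strictly lower than $\mathsf{OPT}^{\mathsf{stable}}$.
   Context: Setting. $V$ is a finite set of $n$ task types and $W=(W_{u,v})_{u,v\in V}$ is a symmetric matrix with entries in $[0,1]$ and $W_{v,v}=1$ for all $v$ (the weighted graph has edges $\{u,v\}$, $u\ne v$, with $W_{u,v}>0$ and weight $W_{u,v}$). A vector $\theta\in\mathbb{R}_{\ge0}^V$ is feasible if $W\theta\ge\mathbf 1$ coordinatewise, and stable if it is feasible and for every $v$, $\theta_v=\min\{x\ge0: x+\sum_{v'\neq v}W_{v,v'}\theta_{v'}\ge1\}$. $\mathsf{OPT}^{\mathsf{IR}}=\min\{\|\theta\|_1:\theta\in[0,1]^V\text{ feasible}\}$ and $\mathsf{OPT}^{\mathsf{stable}}=\min\{\|\theta\|_1:\theta\text{ stable}\}$. Signaling. There are $n$ agents; the type profile $t=(t_1,\dots,t_n)$ is a uniformly random bijection $[n]\to V$. A signaling scheme with finite signal space $\Sigma\subset[0,1]$ is a map $\varphi$ assigning to each bijection $t$ a distribution $\varphi(t)$ on $\Sigma^V$; given $t$, $s\sim\varphi(t)$ is drawn and agent $i$ privately receives $s_{t_i}$. For agent $i$, a signal $\theta\in\Sigma$ with $\Pr[s_{t_i}=\theta]>0$ and $x\ge0$, let $Q_i(x\mid\theta)=\mathbb{E}\big[x+\sum_{v'\neq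 t_i}W_{t_i,v'}s_{v'}\,\big|\,s_{t_i}=\theta\big]$. The scheme is persuasive if for every agent $i$ and every such $\theta$: $Q_i(\theta\mid\theta)\ge1$ and $\theta=\min\{x\ge0:Q_i(x\mid\theta)\ge1\}$. Its cost is $\mathbb{E}[\|s\|_1]$. *)

theory Defs
  imports "HOL-Probability.Probability"
begin

definition weight_matrix :: "'v set \<Rightarrow> ('v \<Rightarrow> 'v \<Rightarrow> real) \<Rightarrow> bool" where
  "weight_matrix V W \<longleftrightarrow> finite V \<and>
     (\<forall>u\<in>V. \<forall>v\<in>V. W u v = W v u \<and> 0 \<le> W u v \<and> W u v \<le> 1) \<and>
     (\<forall>v\<in>V. W v v = 1)"

definition feasible :: "'v set \<Rightarrow> ('v \<Rightarrow> 'v \<Rightarrow> real) \<Rightarrow> ('v \<Rightarrow> real) \<Rightarrow> bool" where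
  "feasible V W \<theta> \<longleftrightarrow> (\<forall>v\<in>V. 0 \<le> \<theta> v) \<and> (\<forall>v\<in>V. (\<Sum>u\<in>V. W v u * \<theta> u) \<ge> 1)"

definition stable :: "'v set \<Rightarrow> ('v \<Rightarrow> 'v \<Rightarrow> real) \<Rightarrow> ('v \<Rightarrow> real) \<Rightarrow> bool" where
  "stable V W \<theta> \<longleftrightarrow> feasible V W \<theta> \<and>
     (\<forall>v\<in>V. \<theta> v = (LEAST x::real. 0 \<le> x \<and> x + (\<Sum>v'\<in>V - {v}. W v v' * \<theta> v') \<ge> 1))"

definition OPT_IR :: "'v set \<Rightarrow> ('v \<Rightarrow> 'v \<Rightarrow> real) \<Rightarrow> real" where
  "OPT_IR V W = Inf ((\<lambda>\<theta>. \<Sum>v\<in>V. \<bar>\<theta> v\<bar>) `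
      {\<theta>. (\<forall>v\<in>V. 0 \<le> \<theta> v \<and> \<theta> v \<le> 1) \<and> feasible V W \<theta>})"

definition OPT_stable :: "'v set \<Rightarrow> ('v \<Rightarrow> 'v \<Rightarrow> real) \<Rightarrow> real" where
  "OPT_stable V W = Inf ((\<lambda>\<theta>. \<Sum>v\<in>V. \<bar>\<theta> v\<bar>) ` {\<theta>. stable V W \<theta>})"

text \<open>Type profiles: bijections from agents {0..<n} to V (extensional outside the agents).\<close>
definition profiles :: "nat \<Rightarrow> 'v set \<Rightarrow> (nat \<Rightarrow> 'v) set" where
  "profiles n V = {t. bij_betw t {..<n} V \<and> (\<forall>i. n \<le> i \<longrightarrow> t i = undefined)}"

text \<open>A signaling scheme with signal space Sig: to each profile a distribution on
  signal vectors s with s v in Sig for v in V (and s v = 0 outside V).\<close>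
definition signaling_scheme ::
  "nat \<Rightarrow> 'v set \<Rightarrow> real set \<Rightarrow> ((nat \<Rightarrow> 'v) \<Rightarrow> ('v \<Rightarrow> real) pmf) \<Rightarrow> bool" where
  "signaling_scheme n V Sig \<phi> \<longleftrightarrow> finite Sig \<and> Sig \<subseteq> {0..1} \<and>
     (\<forall>t\<in>profiles n V. set_pmf (\<phi> t) \<subseteq> {s. (\<forall>v\<in>V. s v \<in> Sig) \<and> (\<forall>v. v \<notin> V \<longrightarrow> s v = 0)})"

definition joint :: "nat \<Rightarrow> 'v set \<Rightarrow> ((nat \<Rightarrow> 'v) \<Rightarrow> ('v \<Rightarrow> real) pmf)
     \<Rightarrow> ((nat \<Rightarrow> 'v) \<times> ('v \<Rightarrow> real)) pmf" where
  "joint n V \<phi> = pmf_of_set (profiles n V) \<bind> (\<lambda>t. map_pmf (\<lambda>s. (t, s)) (\<phi> t))"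

definition cond_exp :: "'a pmf \<Rightarrow> 'a set \<Rightarrow> ('a \<Rightarrow> real) \<Rightarrow> real" where
  "cond_exp P A f = measure_pmf.expectation P (\<lambda>\<omega>. indicator A \<omega> * f \<omega>) / measure_pmf.prob P A"

definition sig_event :: "nat \<Rightarrow> real \<Rightarrow> ((nat \<Rightarrow> 'v) \<times> ('v \<Rightarrow> real)) set" where
  "sig_event i \<theta> = {(t, s). s (t i) = \<theta>}"

definition Q :: "nat \<Rightarrow> 'v set \<Rightarrow> ('v \<Rightarrow> 'v \<Rightarrow> real) \<Rightarrow> ((nat \<Rightarrow> 'v) \<Rightarrow> ('v \<Rightarrow> real) pmf)
     \<Rightarrow> nat \<Rightarrow> real \<Rightarrow> real \<Rightarrow> real" where
  "Q n V W \<phi> i x \<theta> = cond_exp (joint n V \<phi>) (sig_event i \<theta>)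
      (\<lambda>(t, s). x + (\<Sum>v'\<in>V - {t i}. W (t i) v' * s v'))"

definition persuasive :: "nat \<Rightarrow> 'v set \<Rightarrow> ('v \<Rightarrow> 'v \<Rightarrow> real) \<Rightarrow> real set
     \<Rightarrow> ((nat \<Rightarrow> 'v) \<Rightarrow> ('v \<Rightarrow> real) pmf) \<Rightarrow> bool" where
  "persuasive n V W Sig \<phi> \<longleftrightarrow>
     (\<forall>i<n. \<forall>\<theta>\<in>Sig. measure_pmf.prob (joint n V \<phi>) (sig_event i \<theta>) > 0 \<longrightarrow>
        Q n V W \<phi> i \<theta> \<theta> \<ge> 1 \<and> \<theta> = (LEAST x::real. 0 \<le> x \<and> Q n V W \<phi> i x \<theta> \<ge> 1))"

definition cost :: "nat \<Rightarrow> 'v set \<Rightarrow> ((nat \<Rightarrow> 'v) \<Rightarrow> ('v \<Rightarrow> real) pmf) \<Rightarrow> real" where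
  "cost n V \<phi> = measure_pmf.expectation (joint n V \<phi>) (\<lambda>(t, s). \<Sum>v\<in>V. \<bar>s v\<bar>)"

end

theory Submission
  imports Defs
begin

text \<open>
  Stable profiles are the profiles in which every coordinate is the best response
  max 0 (1 - load) to the others; a minimiser of the potential
  (\<Sum>u w. W u w \<theta>(u) \<theta>(w)) / 2 - \<Sum>u. \<theta>(u) over the unit box is one, so OPT_stable is
  an infimum over a nonempty set.

  Let \<tau> be IR-feasible with cost below OPT_stable and \<theta> stable with cost close to it.
  Pairing the constraints of \<theta> and \<tau> through the symmetric W (weak duality) shows that
  the total slack \<Sum>u. ((W\<theta>)(u) - 1) of \<theta> is at least OPT_stable - cost \<tau> > 0, and
  all of it sits on types idle under \<theta>. The scheme announces \<theta> with probability
  1 - \<epsilon> and the unit vector of a fixed type with probability \<epsilon>, independently of the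
  profile. A positive signal x only reaches types whose constraint is tight, so its
  expected load is exactly 1 - x. An agent told 0 has a uniformly distributed type, and
  its expected excess load is at least ((1 - \<epsilon>) slack - \<epsilon> n) / n \<ge> 0 for small \<epsilon>.
  The cost \<epsilon> + (1 - \<epsilon>) cost \<theta> is below OPT_stable because OPT_stable > cost \<tau> \<ge> 1.
\<close>

section \<open>Stability as best response\<close>

definition load :: "'v set \<Rightarrow> ('v \<Rightarrow> 'v \<Rightarrow> real) \<Rightarrow> ('v \<Rightarrow> real) \<Rightarrow> 'v \<Rightarrow> real" where
  "load V W \<theta> v = (\<Sum>w\<in>V - {v}. W v w * \<theta> w)"

lemma Least_nonneg_add_ge_one: "(LEAST x::real. 0 \<le> x \<and> 1 \<le> x + c) = max 0 (1 - c)"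
  by (rule Least_equality) auto

lemma weighted_sum_eq_self_plus_load:
  assumes "weight_matrix V W" "v \<in> V"
  shows "(\<Sum>u\<in>V. W v u * \<theta> u) = \<theta> v + load V W \<theta> v"
  using assms sum.remove[of V v "\<lambda>u. W v u * \<theta> u"] by (simp add: weight_matrix_def load_def)

lemma load_nonneg:
  assumes "weight_matrix V W" "v \<in> V" "\<And>u. u \<in> V \<Longrightarrow> 0 \<le> \<theta> u"
  shows "0 \<le> load V W \<theta> v"
  unfolding load_def using assms by (intro sum_nonneg mult_nonneg_nonneg) (auto simp: weight_matrix_def)

lemma load_cong: "(\<And>u. u \<in> V \<Longrightarrow> \<theta> u = \<theta>' u) \<Longrightarrow> load V W \<theta> v = load V W \<theta>' v"
  unfolding load_def by (intro sum.cong) auto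

lemma stable_iff_best_response:
  assumes "weight_matrix V W"
  shows "stable V W \<theta> \<longleftrightarrow> (\<forall>v\<in>V. \<theta> v = max 0 (1 - load V W \<theta> v))"
  using assms
  by (auto simp: stable_def feasible_def load_def Least_nonneg_add_ge_one
      weighted_sum_eq_self_plus_load[unfolded load_def])

lemma stable_bounds:
  assumes wm: "weight_matrix V W" and "stable V W \<theta>" "v \<in> V"
  shows "0 \<le> \<theta> v" "\<theta> v \<le> 1"
proof -
  have br: "\<forall>u\<in>V. \<theta> u = max 0 (1 - load V W \<theta> u)"
    using assms stable_iff_best_response[OF wm] by blast
  then have "0 \<le> load V W \<theta> v"
    using load_nonneg[OF wm \<open>v \<in> V\<close>] by (metis max.cobounded1)
  then show "0 \<le> \<theta> v" "\<theta> v \<le> 1"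
    using br \<open>v \<in> V\<close> by auto
qed

section \<open>Existence of stable profiles\<close>

definition potential :: "'v set \<Rightarrow> ('v \<Rightarrow> 'v \<Rightarrow> real) \<Rightarrow> ('v \<Rightarrow> real) \<Rightarrow> real" where
  "potential V W \<theta> = (\<Sum>u\<in>V. \<Sum>w\<in>V. W u w * \<theta> u * \<theta> w) / 2 - (\<Sum>u\<in>V. \<theta> u)"

lemma potential_split:
  assumes wm: "weight_matrix V W" and v: "v \<in> V"
  shows "potential V W \<theta> = \<theta> v ^ 2 / 2 + \<theta> v * (load V W \<theta> v - 1)
           + ((\<Sum>u\<in>V - {v}. \<Sum>w\<in>V - {v}. W u w * \<theta> u * \<theta> w) / 2 - (\<Sum>u\<in>V - {v}. \<theta> u))"
proof -
  have fin: "finite V" using wm by (simp add: weight_matrix_def)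
  define f where "f u w = W u w * \<theta> u * \<theta> w" for u w
  have row: "(\<Sum>w\<in>V - {v}. f v w) = \<theta> v * load V W \<theta> v"
    unfolding f_def load_def by (simp add: sum_distrib_left algebra_simps)
  have col: "(\<Sum>u\<in>V - {v}. f u v) = \<theta> v * load V W \<theta> v"
    using wm v unfolding row[symmetric] f_def weight_matrix_def by (intro sum.cong) auto
  have "(\<Sum>u\<in>V. \<Sum>w\<in>V. f u w) = (\<Sum>w\<in>V. f v w) + (\<Sum>u\<in>V - {v}. \<Sum>w\<in>V. f u w)"
    using sum.remove[OF fin v] by blast
  also have "\<dots> = f v v + (\<Sum>w\<in>V - {v}. f v w) + (\<Sum>u\<in>V - {v}. f u v + (\<Sum>w\<in>V - {v}. f u w))"
    using sum.remove[OF fin v, of "f _"] by presburger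
  also have "\<dots> = \<theta> v ^ 2 + 2 * \<theta> v * load V W \<theta> v + (\<Sum>u\<in>V - {v}. \<Sum>w\<in>V - {v}. f u w)"
    using wm v by (simp only: sum.distrib row col) (simp add: f_def weight_matrix_def power2_eq_square)
  finally show ?thesis
    unfolding potential_def f_def using sum.remove[OF fin v, of \<theta>] by (simp add: algebra_simps)
qed

lemma potential_update:
  fixes \<theta> :: "'v \<Rightarrow> real"
  assumes "weight_matrix V W" "v \<in> V"
  defines "c \<equiv> 1 - load V W \<theta> v"
  shows "potential V W (\<theta>(v := a)) - potential V W \<theta> = ((a - c)\<^sup>2 - (\<theta> v - c)\<^sup>2) / 2"
proof -
  have "load V W (\<theta>(v := a)) v = load V W \<theta> v"
    unfolding load_def by (intro sum.cong) auto
  moreover have "(\<Sum>u\<in>V - {v}. \<Sum>w\<in>V - {v}. W u w * (\<theta>(v := a)) u * (\<theta>(v := a)) w)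
      = (\<Sum>u\<in>V - {v}. \<Sum>w\<in>V - {v}. W u w * \<theta> u * \<theta> w)"
    by (intro sum.cong) auto
  moreover have "(\<Sum>u\<in>V - {v}. (\<theta>(v := a)) u) = (\<Sum>u\<in>V - {v}. \<theta> u)"
    by (intro sum.cong) auto
  ultimately show ?thesis
    unfolding potential_split[OF assms(1,2), of "\<theta>(v := a)"] potential_split[OF assms(1,2), of \<theta>] c_def
    by (simp add: power2_eq_square algebra_simps)
qed

lemma nearest_nonneg_eq_max:
  fixes t c :: real
  assumes "0 \<le> t" "(t - c)\<^sup>2 \<le> (max 0 c - c)\<^sup>2"
  shows "t = max 0 c"
proof (cases "0 \<le> c")
  case True
  then show ?thesis using assms by simp
next
  case False
  have "\<bar>t - c\<bar> \<le> \<bar>c\<bar>"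
    using assms(2) False by (simp only: abs_le_square_iff) simp
  then show ?thesis using assms(1) False by linarith
qed

lemma compact_box:
  "compact {\<theta>::'v \<Rightarrow> real. (\<forall>v\<in>V. \<theta> v \<in> {0..1}) \<and> (\<forall>v. v \<notin> V \<longrightarrow> \<theta> v = 0)}"
proof -
  let ?S = "\<lambda>v. if v \<in> V then {0..1::real} else {0}"
  have "{\<theta>. (\<forall>v\<in>V. \<theta> v \<in> {0..1}) \<and> (\<forall>v. v \<notin> V \<longrightarrow> \<theta> v = 0)} = PiE UNIV ?S"
    by (auto simp: PiE_def Pi_def extensional_def)
  moreover have "compactin (product_topology (\<lambda>_. euclidean) UNIV) (PiE UNIV ?S)"
    by (subst compactin_PiE) auto
  ultimately show ?thesis by (simp add: euclidean_product_topology)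
qed

lemma continuous_on_potential:
  fixes V :: "'v set" and K :: "('v \<Rightarrow> real) set"
  shows "continuous_on K (potential V W)"
proof -
  have "continuous_on K (\<lambda>\<theta>. \<theta> u)" for u :: 'v
    by (rule continuous_on_subset[OF continuous_on_product_coordinates]) simp
  then show ?thesis
    unfolding potential_def by (intro continuous_intros) auto
qed

lemma stable_exists:
  fixes V :: "'v set"
  assumes wm: "weight_matrix V W"
  shows "\<exists>\<theta>. stable V W \<theta>"
proof -
  define K where "K = {\<theta>::'v \<Rightarrow> real. (\<forall>v\<in>V. \<theta> v \<in> {0..1}) \<and> (\<forall>v. v \<notin> V \<longrightarrow> \<theta> v = 0)}"
  have "(\<lambda>_. 0) \<in> K" unfolding K_def by auto
  then obtain \<theta> where "\<theta> \<in> K"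
    and min: "\<And>\<theta>'. \<theta>' \<in> K \<Longrightarrow> potential V W \<theta> \<le> potential V W \<theta>'"
    using continuous_attains_inf[OF compact_box[of V, folded K_def] _ continuous_on_potential]
    by blast
  then have box: "\<forall>v\<in>V. \<theta> v \<in> {0..1}" and outside: "\<forall>v. v \<notin> V \<longrightarrow> \<theta> v = 0"
    unfolding K_def by blast+
  have "\<theta> v = max 0 (1 - load V W \<theta> v)" if v: "v \<in> V" for v
  proof -
    define c where "c = 1 - load V W \<theta> v"
    have "0 \<le> load V W \<theta> v"
      using box by (intro load_nonneg[OF wm v]) auto
    then have "\<theta>(v := max 0 c) \<in> K"
      using box outside v unfolding K_def c_def by auto
    then have "0 \<le> potential V W (\<theta>(v := max 0 c)) - potential V W \<theta>"
      using min by fastforce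
    then have "(\<theta> v - c)\<^sup>2 \<le> (max 0 c - c)\<^sup>2"
      unfolding potential_update[OF wm v] c_def by simp
    then show ?thesis
      using box v unfolding c_def by (intro nearest_nonneg_eq_max) auto
  qed
  then show ?thesis
    using stable_iff_best_response[OF wm] by blast
qed

section \<open>Slack and weak duality\<close>

definition slack :: "'v set \<Rightarrow> ('v \<Rightarrow> 'v \<Rightarrow> real) \<Rightarrow> ('v \<Rightarrow> real) \<Rightarrow> real" where
  "slack V W \<theta> = (\<Sum>u\<in>V. (\<Sum>w\<in>V. W u w * \<theta> w) - 1)"

lemma stable_excess:
  assumes wm: "weight_matrix V W" and "stable V W \<theta>" "u \<in> V"
  shows "(\<Sum>w\<in>V. W u w * \<theta> w) - 1 = (if \<theta> u = 0 then load V W \<theta> u - 1 else 0)"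
  using assms
  unfolding stable_iff_best_response[OF wm] weighted_sum_eq_self_plus_load[OF wm \<open>u \<in> V\<close>]
  by (auto simp: max_def split: if_splits)

lemma stable_slack_pos_imp_idle:
  assumes wm: "weight_matrix V W" and st: "stable V W \<theta>" and "0 < slack V W \<theta>"
  shows "0 \<in> \<theta> ` V"
proof (rule ccontr)
  assume "0 \<notin> \<theta> ` V"
  then have "slack V W \<theta> = 0"
    unfolding slack_def using stable_excess[OF wm st] by (intro sum.neutral) force
  then show False using assms by simp
qed

lemma sum_le_sum_plus_slack:
  assumes wm: "weight_matrix V W" and "feasible V W \<theta>" "feasible V W \<tau>"
    and \<tau>1: "\<forall>v\<in>V. \<tau> v \<le> 1"
  shows "(\<Sum>v\<in>V. \<theta> v) \<le> (\<Sum>v\<in>V. \<tau> v) + slack V W \<theta>"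
proof -
  have \<theta>: "\<forall>v\<in>V. 0 \<le> \<theta> v \<and> 1 \<le> (\<Sum>u\<in>V. W v u * \<theta> u)"
    and \<tau>: "\<forall>v\<in>V. 0 \<le> \<tau> v \<and> 1 \<le> (\<Sum>u\<in>V. W v u * \<tau> u)"
    using assms unfolding feasible_def by auto
  have "(\<Sum>v\<in>V. \<theta> v) \<le> (\<Sum>v\<in>V. \<theta> v * (\<Sum>u\<in>V. W v u * \<tau> u))"
    using \<theta> \<tau> by (intro sum_mono) (metis mult.right_neutral mult_left_mono)
  also have "\<dots> = (\<Sum>v\<in>V. \<Sum>u\<in>V. \<tau> u * (W u v * \<theta> v))"
    using wm unfolding weight_matrix_def sum_distrib_left
    by (intro sum.cong refl) (simp add: algebra_simps)
  also have "\<dots> = (\<Sum>u\<in>V. \<tau> u * (\<Sum>v\<in>V. W u v * \<theta> v))"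
    by (subst sum.swap) (simp add: sum_distrib_left)
  also have "\<dots> \<le> (\<Sum>u\<in>V. \<tau> u + ((\<Sum>v\<in>V. W u v * \<theta> v) - 1))"
  proof (rule sum_mono)
    fix u assume "u \<in> V"
    then have "\<tau> u * ((\<Sum>v\<in>V. W u v * \<theta> v) - 1) \<le> 1 * ((\<Sum>v\<in>V. W u v * \<theta> v) - 1)"
      using \<theta> \<tau> \<tau>1 by (intro mult_right_mono) auto
    then show "\<tau> u * (\<Sum>v\<in>V. W u v * \<theta> v) \<le> \<tau> u + ((\<Sum>v\<in>V. W u v * \<theta> v) - 1)"
      by (simp add: algebra_simps)
  qed
  finally show ?thesis
    unfolding slack_def by (simp add: sum.distrib)
qed

lemma feasible_sum_ge_one:
  assumes wm: "weight_matrix V W" and "V \<noteq> {}" and fe: "feasible V W \<theta>"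
  shows "1 \<le> (\<Sum>v\<in>V. \<theta> v)"
proof -
  have fin: "finite V" using wm by (simp add: weight_matrix_def)
  have "real (card V) \<le> (\<Sum>u\<in>V. \<Sum>w\<in>V. W u w * \<theta> w)"
    using fe sum_mono[of V "\<lambda>_. 1::real"] unfolding feasible_def by auto
  also have "\<dots> = (\<Sum>w\<in>V. \<Sum>u\<in>V. W u w * \<theta> w)" by (rule sum.swap)
  also have "\<dots> \<le> (\<Sum>w\<in>V. \<Sum>u\<in>V. \<theta> w)"
    using wm fe unfolding weight_matrix_def feasible_def
    by (intro sum_mono mult_left_le_one_le) auto
  also have "\<dots> = real (card V) * (\<Sum>w\<in>V. \<theta> w)" by (simp add: sum_distrib_left)
  finally show ?thesis
    using fin assms(2) by (simp add: card_gt_0_iff)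
qed

section \<open>Exchangeable agents and persuasiveness\<close>

lemma finite_profiles:
  assumes "finite V"
  shows "finite (profiles n V)"
proof -
  have "profiles n V \<subseteq> PiE {..<n} (\<lambda>_. V)"
    unfolding profiles_def PiE_def extensional_def bij_betw_def by auto
  then show ?thesis
    using finite_subset finite_PiE[of "{..<n}" "\<lambda>_. V"] assms by auto
qed

lemma profiles_nonempty:
  assumes "finite V" "n = card V"
  shows "profiles n V \<noteq> {}"
proof -
  obtain h where "bij_betw h {0..<n} V"
    using ex_bij_betw_nat_finite[OF assms(1)] assms(2) by blast
  then have "bij_betw h {..<n} V"
    by (simp add: atLeast0LessThan)
  then have "bij_betw (restrict h {..<n}) {..<n} V"
    using bij_betw_cong[of "{..<n}" "restrict h {..<n}" h] by simp
  then have "restrict h {..<n} \<in> profiles n V"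
    unfolding profiles_def by auto
  then show ?thesis by blast
qed

lemma profile_swap_agents:
  assumes "i < n" "j < n" "t \<in> profiles n V"
  shows "t \<circ> Transposition.transpose i j \<in> profiles n V"
  using assms bij_betw_trans[of "Transposition.transpose i j" "{..<n}" "{..<n}" t V]
  by (auto simp: profiles_def transpose_def)

lemma sum_profiles_agent_type:
  assumes "i < n"
  shows "real n * (\<Sum>t\<in>profiles n V. g (t i)) = real (card (profiles n V)) * (\<Sum>u\<in>V. g u)"
proof -
  have swap: "(\<Sum>t\<in>profiles n V. g (t j)) = (\<Sum>t\<in>profiles n V. g (t i))" if "j < n" for j
    using profile_swap_agents[OF assms that] profile_swap_agents[OF that assms]
    by (intro sum.reindex_bij_witness[where i="\<lambda>t. t \<circ> Transposition.transpose i j"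
          and j="\<lambda>t. t \<circ> Transposition.transpose i j"])
       (auto simp: fun_eq_iff transpose_commute)
  have "real n * (\<Sum>t\<in>profiles n V. g (t i)) = (\<Sum>j<n. \<Sum>t\<in>profiles n V. g (t j))"
    using swap by simp
  also have "\<dots> = (\<Sum>t\<in>profiles n V. \<Sum>j<n. g (t j))"
    by (rule sum.swap)
  also have "\<dots> = (\<Sum>t\<in>profiles n V. \<Sum>u\<in>V. g u)"
    by (intro sum.cong refl sum.reindex_bij_betw) (simp add: profiles_def)
  finally show ?thesis by simp
qed

lemma set_pmf_joint:
  assumes "finite V" "n = card V"
  shows "set_pmf (joint n V \<phi>) = (SIGMA t:profiles n V. set_pmf (\<phi> t))"
  using finite_profiles[OF assms(1)] profiles_nonempty[OF assms] by (auto simp: joint_def)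

lemma finite_set_pmf_joint:
  assumes "finite V" "n = card V" "signaling_scheme n V Sig \<phi>"
  shows "finite (set_pmf (joint n V \<phi>))"
proof -
  let ?S = "{s. (\<forall>v\<in>V. s v \<in> Sig) \<and> (\<forall>v. v \<notin> V \<longrightarrow> s v = (0::real))}"
  have "finite ?S"
    using assms(1,3) finite_set_of_finite_funs[of V Sig 0]
    unfolding signaling_scheme_def by (auto elim!: finite_subset[rotated])
  moreover have "set_pmf (joint n V \<phi>) \<subseteq> profiles n V \<times> ?S"
    using assms(3) unfolding set_pmf_joint[OF assms(1,2)] signaling_scheme_def by blast
  ultimately show ?thesis
    using finite_profiles[OF assms(1)] by (meson finite_SigmaI finite_subset)
qed

lemma Q_eq_add_Q_0:
  assumes "finite V" "n = card V" "signaling_scheme n V Sig \<phi>"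
    and "measure_pmf.prob (joint n V \<phi>) (sig_event i \<theta>) > 0"
  shows "Q n V W \<phi> i x \<theta> = x + Q n V W \<phi> i 0 \<theta>"
proof -
  let ?J = "joint n V \<phi>" and ?E = "sig_event i \<theta>"
  have int: "integrable ?J f" for f :: "_ \<Rightarrow> real"
    by (rule integrable_measure_pmf_finite[OF finite_set_pmf_joint[OF assms(1-3)]])
  have "measure_pmf.expectation ?J
        (\<lambda>\<omega>. indicator ?E \<omega> * (case \<omega> of (t, s) \<Rightarrow> x + load V W s (t i)))
      = x * measure_pmf.prob ?J ?E + measure_pmf.expectation ?J
        (\<lambda>\<omega>. indicator ?E \<omega> * (case \<omega> of (t, s) \<Rightarrow> load V W s (t i)))"
    by (simp add: distrib_left split_beta int)
  then show ?thesis
    using assms(4) by (simp add: Q_def cond_exp_def load_def[symmetric] add_divide_distrib)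
qed

lemma persuasiveI:
  assumes "finite V" "n = card V" "signaling_scheme n V Sig \<phi>"
    and "\<And>i \<theta>. i < n \<Longrightarrow> \<theta> \<in> Sig \<Longrightarrow> measure_pmf.prob (joint n V \<phi>) (sig_event i \<theta>) > 0 \<Longrightarrow>
           \<theta> = max 0 (1 - Q n V W \<phi> i 0 \<theta>)"
  shows "persuasive n V W Sig \<phi>"
  unfolding persuasive_def
proof (intro allI impI ballI)
  fix i \<theta> assume *: "i < n" "\<theta> \<in> Sig" "measure_pmf.prob (joint n V \<phi>) (sig_event i \<theta>) > 0"
  define q where "q = Q n V W \<phi> i 0 \<theta>"
  have shift: "Q n V W \<phi> i x \<theta> = x + q" for x
    unfolding q_def by (rule Q_eq_add_Q_0[OF assms(1-3) *(3)])
  have "\<theta> = max 0 (1 - q)"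
    unfolding q_def by (rule assms(4)[OF *])
  then show "1 \<le> Q n V W \<phi> i \<theta> \<theta> \<and> \<theta> = (LEAST x. 0 \<le> x \<and> 1 \<le> Q n V W \<phi> i x \<theta>)"
    unfolding shift Least_nonneg_add_ge_one by linarith
qed

lemma cond_exp_eq_const:
  assumes "\<And>\<omega>. \<omega> \<in> set_pmf P \<Longrightarrow> \<omega> \<in> A \<Longrightarrow> f \<omega> = c" "measure_pmf.prob P A > 0"
  shows "cond_exp P A f = c"
proof -
  have "measure_pmf.expectation P (\<lambda>\<omega>. indicator A \<omega> * f \<omega>)
      = measure_pmf.expectation P (\<lambda>\<omega>. c * indicator A \<omega>)"
    using assms(1) by (intro integral_cong_AE) (auto simp: AE_measure_pmf_iff split: split_indicator)
  then show ?thesis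
    using assms(2) by (simp add: cond_exp_def)
qed

lemma expectation_joint_const:
  assumes "finite V" "n = card V" "i < n" "finite (set_pmf P)"
  shows "measure_pmf.expectation (joint n V (\<lambda>_. P)) (\<lambda>(t, s). k (t i) s)
           = (\<Sum>u\<in>V. measure_pmf.expectation P (k u)) / n"
proof -
  let ?N = "real (card (profiles n V))"
  have fin: "finite (profiles n V)" and ne: "profiles n V \<noteq> {}"
    using finite_profiles profiles_nonempty assms(1,2) by auto
  then have N: "0 < ?N" by (simp add: card_gt_0_iff)
  have "measure_pmf.expectation (joint n V (\<lambda>_. P)) (\<lambda>(t, s). k (t i) s)
      = (\<Sum>t\<in>profiles n V. measure_pmf.expectation P (k (t i))) / ?N"
    unfolding joint_def using assms(4) fin ne
    by (subst pmf_expectation_bind_pmf_of_set) (auto simp: sum_divide_distrib field_simps)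
  also have "\<dots> = (\<Sum>u\<in>V. measure_pmf.expectation P (k u)) / n"
    using sum_profiles_agent_type[OF assms(3), of "\<lambda>u. measure_pmf.expectation P (k u)"] N assms(3)
    by (simp add: field_simps)
  finally show ?thesis .
qed

section \<open>Mixing a stable profile with a unit vector\<close>

definition mix_pmf :: "real \<Rightarrow> 'a \<Rightarrow> 'a \<Rightarrow> 'a pmf" where
  "mix_pmf p x y = map_pmf (\<lambda>b. if b then x else y) (bernoulli_pmf p)"

lemma set_mix_pmf_subset: "set_pmf (mix_pmf p x y) \<subseteq> {x, y}"
  unfolding mix_pmf_def by auto

lemma expectation_mix_pmf:
  assumes "0 \<le> p" "p \<le> 1"
  shows "measure_pmf.expectation (mix_pmf p x y) f = p * f x + (1 - p) * f y"
  using assms unfolding mix_pmf_def by (simp add: mult.commute)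

lemma mixture_signaling_scheme:
  assumes wm: "weight_matrix V W" and st: "stable V W \<theta>" and out: "\<forall>v. v \<notin> V \<longrightarrow> \<theta> v = 0"
    and "v\<^sub>0 \<in> V" "0 \<in> \<theta> ` V"
  shows "signaling_scheme n V (insert 1 (\<theta> ` V)) (\<lambda>_. mix_pmf \<epsilon> (indicator {v\<^sub>0}) \<theta>)"
  unfolding signaling_scheme_def
proof (intro conjI ballI)
  let ?Sig = "insert 1 (\<theta> ` V)"
  let ?S = "{s. (\<forall>v\<in>V. s v \<in> ?Sig) \<and> (\<forall>v. v \<notin> V \<longrightarrow> s v = 0)}"
  show "finite ?Sig" using wm by (simp add: weight_matrix_def)
  show "?Sig \<subseteq> {0..1}"
    using stable_bounds[OF wm st] by (simp add: image_subset_iff)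
  have "indicator {v\<^sub>0} v \<in> ?Sig" for v
    using assms(5) by (cases "v = v\<^sub>0") simp_all
  moreover have "indicator {v\<^sub>0} v = (0::real)" if "v \<notin> V" for v
    using that assms(4) by (cases "v = v\<^sub>0") simp_all
  moreover have "\<theta> \<in> ?S"
    using out by simp
  ultimately have "{indicator {v\<^sub>0}, \<theta>} \<subseteq> ?S"
    by blast
  with set_mix_pmf_subset show "set_pmf (mix_pmf \<epsilon> (indicator {v\<^sub>0}) \<theta>) \<subseteq> ?S" for t
    by (rule order_trans)
qed

lemma load_indicator_self:
  "load V W (indicator {v}) v = 0"
  unfolding load_def by simp

lemma mixture_positive_signal:
  assumes wm: "weight_matrix V W" and n: "n = card V" and st: "stable V W \<theta>"
    and "i < n" "0 < x"
    and pos: "measure_pmf.prob (joint n V (\<lambda>_. mix_pmf \<epsilon> (indicator {v\<^sub>0}) \<theta>)) (sig_event i x) > 0"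
  shows "Q n V W (\<lambda>_. mix_pmf \<epsilon> (indicator {v\<^sub>0}) \<theta>) i 0 x = 1 - x"
  unfolding Q_def
proof (rule cond_exp_eq_const[OF _ pos])
  have fin: "finite V" using wm by (simp add: weight_matrix_def)
  fix \<omega>
  assume "\<omega> \<in> set_pmf (joint n V (\<lambda>_. mix_pmf \<epsilon> (indicator {v\<^sub>0}) \<theta>))" and E: "\<omega> \<in> sig_event i x"
  then obtain t s
    where \<omega>: "\<omega> = (t, s)" "t \<in> profiles n V" "s \<in> set_pmf (mix_pmf \<epsilon> (indicator {v\<^sub>0}) \<theta>)"
    unfolding set_pmf_joint[OF fin n] by (elim SigmaE)
  then have "s \<in> {indicator {v\<^sub>0}, \<theta>}" "s (t i) = x"
    using set_mix_pmf_subset[of \<epsilon> "indicator {v\<^sub>0}" \<theta>] E unfolding sig_event_def by auto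
  have "t i \<in> V"
    using \<omega>(2) \<open>i < n\<close> unfolding profiles_def bij_betw_def by auto
  then have "load V W s (t i) = 1 - x"
    using \<open>s \<in> {indicator {v\<^sub>0}, \<theta>}\<close> \<open>s (t i) = x\<close> \<open>0 < x\<close> stable_iff_best_response[OF wm] st
    by (auto simp: load_indicator_self max_def split: split_indicator if_splits)
  then show "(case \<omega> of (t, s) \<Rightarrow> 0 + (\<Sum>v'\<in>V - {t i}. W (t i) v' * s v')) = 1 - x"
    using \<omega>(1) by (simp add: load_def)
qed

lemma mixture_zero_signal:
  assumes wm: "weight_matrix V W" and n: "n = card V" and st: "stable V W \<theta>"
    and "i < n" "0 \<le> \<epsilon>" "\<epsilon> \<le> 1" and \<epsilon>: "\<epsilon> * n \<le> (1 - \<epsilon>) * slack V W \<theta>"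
    and pos: "measure_pmf.prob (joint n V (\<lambda>_. mix_pmf \<epsilon> (indicator {v\<^sub>0}) \<theta>)) (sig_event i 0) > 0"
  shows "1 \<le> Q n V W (\<lambda>_. mix_pmf \<epsilon> (indicator {v\<^sub>0}) \<theta>) i 0 0"
proof -
  let ?P = "mix_pmf \<epsilon> (indicator {v\<^sub>0}) \<theta>"
  let ?J = "joint n V (\<lambda>_. ?P)" and ?E = "sig_event i (0::real)"
  define k where "k u s = (if s u = 0 then load V W s u - 1 else 0)" for u s
  have fin: "finite V" using wm by (simp add: weight_matrix_def)
  have finP: "finite (set_pmf ?P)"
    by (rule finite_subset[OF set_mix_pmf_subset]) simp
  have "finite (set_pmf ?J)"
    unfolding set_pmf_joint[OF fin n] by (intro finite_SigmaI finite_profiles[OF fin] finP)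
  then have int: "integrable ?J f" for f :: "_ \<Rightarrow> real"
    by (rule integrable_measure_pmf_finite)
  have prob: "measure_pmf.prob ?J ?E = measure_pmf.expectation ?J (indicator ?E)"
    by simp
  have excess: "(\<Sum>u\<in>V. k u \<theta>) = slack V W \<theta>"
    unfolding slack_def k_def using stable_excess[OF wm st] by (intro sum.cong) auto
  have "-1 \<le> k u (indicator {v\<^sub>0})" if "u \<in> V" for u
    using load_nonneg[OF wm that, of "indicator {v\<^sub>0}"] by (simp add: k_def)
  then have unit: "- real n \<le> (\<Sum>u\<in>V. k u (indicator {v\<^sub>0}))"
    using sum_mono[of V "\<lambda>_. -1::real"] n by simp
  have "0 \<le> \<epsilon> * (\<Sum>u\<in>V. k u (indicator {v\<^sub>0})) + (1 - \<epsilon>) * (\<Sum>u\<in>V. k u \<theta>)"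
    using mult_left_mono[OF unit \<open>0 \<le> \<epsilon>\<close>] \<epsilon> unfolding excess by linarith
  also have "\<dots> = real n * measure_pmf.expectation ?J (\<lambda>(t, s). k (t i) s)"
    using \<open>i < n\<close>
    unfolding expectation_joint_const[OF fin n \<open>i < n\<close> finP]
      expectation_mix_pmf[OF \<open>0 \<le> \<epsilon>\<close> \<open>\<epsilon> \<le> 1\<close>]
    by (simp add: sum.distrib sum_distrib_left)
  also have "measure_pmf.expectation ?J (\<lambda>(t, s). k (t i) s)
      = measure_pmf.expectation ?J (\<lambda>\<omega>. indicator ?E \<omega> * (case \<omega> of (t, s) \<Rightarrow> 0 + load V W s (t i)))
        - measure_pmf.prob ?J ?E"
    unfolding prob
    by (subst Bochner_Integration.integral_diff[symmetric, OF int int])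
       (auto simp: k_def sig_event_def split: split_indicator intro!: Bochner_Integration.integral_cong)
  finally have "measure_pmf.prob ?J ?E
      \<le> measure_pmf.expectation ?J (\<lambda>\<omega>. indicator ?E \<omega> * (case \<omega> of (t, s) \<Rightarrow> 0 + load V W s (t i)))"
    using \<open>i < n\<close> by (simp add: zero_le_mult_iff)
  then show ?thesis
    using pos by (simp add: Q_def cond_exp_def load_def[symmetric] le_divide_eq)
qed

lemma mixture_persuasive:
  assumes wm: "weight_matrix V W" and n: "n = card V" and st: "stable V W \<theta>"
    and out: "\<forall>v. v \<notin> V \<longrightarrow> \<theta> v = 0" and "v\<^sub>0 \<in> V" "0 \<in> \<theta> ` V"
    and "0 \<le> \<epsilon>" "\<epsilon> \<le> 1" "\<epsilon> * n \<le> (1 - \<epsilon>) * slack V W \<theta>"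
  shows "persuasive n V W (insert 1 (\<theta> ` V)) (\<lambda>_. mix_pmf \<epsilon> (indicator {v\<^sub>0}) \<theta>)"
proof (rule persuasiveI)
  show "finite V" using wm by (simp add: weight_matrix_def)
  show "signaling_scheme n V (insert 1 (\<theta> ` V)) (\<lambda>_. mix_pmf \<epsilon> (indicator {v\<^sub>0}) \<theta>)"
    by (rule mixture_signaling_scheme[OF wm st out assms(5,6)])
  fix i x
  assume "i < n" "x \<in> insert 1 (\<theta> ` V)"
    and pos: "measure_pmf.prob (joint n V (\<lambda>_. mix_pmf \<epsilon> (indicator {v\<^sub>0}) \<theta>)) (sig_event i x) > 0"
  then have "0 \<le> x"
    using stable_bounds(1)[OF wm st] by auto
  then consider "0 < x" | "x = 0" by fastforce
  then show "x = max 0 (1 - Q n V W (\<lambda>_. mix_pmf \<epsilon> (indicator {v\<^sub>0}) \<theta>) i 0 x)"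
  proof cases
    case 1
    then show ?thesis
      using mixture_positive_signal[OF wm n st \<open>i < n\<close> 1] pos by simp
  next
    case 2
    then show ?thesis
      using mixture_zero_signal[OF wm n st \<open>i < n\<close> assms(7-9)] pos by simp
  qed
qed (use n in simp)

lemma cost_mixture:
  assumes wm: "weight_matrix V W" and n: "n = card V" and st: "stable V W \<theta>"
    and "v\<^sub>0 \<in> V" "0 \<le> \<epsilon>" "\<epsilon> \<le> 1"
  shows "cost n V (\<lambda>_. mix_pmf \<epsilon> (indicator {v\<^sub>0}) \<theta>) = \<epsilon> + (1 - \<epsilon>) * (\<Sum>v\<in>V. \<theta> v)"
proof -
  have fin: "finite V" using wm by (simp add: weight_matrix_def)
  have "0 < n" using n fin \<open>v\<^sub>0 \<in> V\<close> card_gt_0_iff by blast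
  have finP: "finite (set_pmf (mix_pmf \<epsilon> (indicator {v\<^sub>0}) \<theta>))"
    by (rule finite_subset[OF set_mix_pmf_subset]) simp
  have "(\<Sum>v\<in>V. \<bar>indicator {v\<^sub>0} v :: real\<bar>) = 1"
    using fin \<open>v\<^sub>0 \<in> V\<close> by (simp add: indicator_def sum.delta)
  moreover have "(\<Sum>v\<in>V. \<bar>\<theta> v\<bar>) = (\<Sum>v\<in>V. \<theta> v)"
    using stable_bounds(1)[OF wm st] by (intro sum.cong) auto
  ultimately show ?thesis
    using expectation_joint_const[OF fin n \<open>0 < n\<close> finP, of "\<lambda>_ s. \<Sum>v\<in>V. \<bar>s v\<bar>"] \<open>0 < n\<close> n
    by (simp add: cost_def expectation_mix_pmf[OF \<open>0 \<le> \<epsilon>\<close> \<open>\<epsilon> \<le> 1\<close>])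
qed

section \<open>Choice of the mixture\<close>

lemma OPT_IR_less_imp_witness:
  assumes wm: "weight_matrix V W" and "OPT_IR V W < c"
  shows "\<exists>\<tau>. feasible V W \<tau> \<and> (\<forall>v\<in>V. \<tau> v \<le> 1) \<and> (\<Sum>v\<in>V. \<tau> v) < c"
proof -
  let ?S = "{\<theta>. (\<forall>v\<in>V. 0 \<le> \<theta> v \<and> \<theta> v \<le> 1) \<and> feasible V W \<theta>}"
  have "1 \<le> (\<Sum>u\<in>V. W v u * 1)" if "v \<in> V" for v
    using weighted_sum_eq_self_plus_load[OF wm that, of "\<lambda>_. 1"]
      load_nonneg[OF wm that, of "\<lambda>_. 1"]
    by linarith
  then have "feasible V W (\<lambda>_. 1)"
    unfolding feasible_def by simp
  then have "(\<lambda>_. 1) \<in> ?S" by simp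
  then have "(\<lambda>\<theta>. \<Sum>v\<in>V. \<bar>\<theta> v\<bar>) ` ?S \<noteq> {}"
    unfolding image_is_empty ex_in_conv[symmetric] by (rule exI[where x = "\<lambda>_. 1"])
  from cInf_lessD[OF this assms(2)[unfolded OPT_IR_def]]
  obtain \<tau> where "\<tau> \<in> ?S" "(\<Sum>v\<in>V. \<bar>\<tau> v\<bar>) < c"
    by blast
  moreover have "(\<Sum>v\<in>V. \<bar>\<tau> v\<bar>) = (\<Sum>v\<in>V. \<tau> v)"
    using \<open>\<tau> \<in> ?S\<close> by (intro sum.cong) auto
  ultimately show ?thesis by auto
qed

lemma OPT_stable_approx:
  assumes wm: "weight_matrix V W" and "0 < \<eta>"
  shows "\<exists>\<theta>. stable V W \<theta> \<and> (\<forall>v. v \<notin> V \<longrightarrow> \<theta> v = 0) \<and>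
           OPT_stable V W \<le> (\<Sum>v\<in>V. \<theta> v) \<and> (\<Sum>v\<in>V. \<theta> v) < OPT_stable V W + \<eta>"
proof -
  let ?C = "(\<lambda>\<theta>. \<Sum>v\<in>V. \<bar>\<theta> v\<bar>) ` {\<theta>. stable V W \<theta>}"
  obtain \<theta>\<^sub>0 where "stable V W \<theta>\<^sub>0" using stable_exists[OF wm] by blast
  then have "\<theta>\<^sub>0 \<in> {\<theta>. stable V W \<theta>}" by simp
  then have "?C \<noteq> {}"
    unfolding image_is_empty ex_in_conv[symmetric] by (rule exI[where x = \<theta>\<^sub>0])
  moreover have "Inf ?C < OPT_stable V W + \<eta>"
    using \<open>0 < \<eta>\<close> unfolding OPT_stable_def by simp
  ultimately have "\<exists>y\<in>?C. y < OPT_stable V W + \<eta>"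
    by (rule cInf_lessD)
  then obtain \<theta> where st: "\<theta> \<in> {\<theta>. stable V W \<theta>}"
    and less: "(\<Sum>v\<in>V. \<bar>\<theta> v\<bar>) < OPT_stable V W + \<eta>"
    by blast
  define \<theta>' where "\<theta>' v = (if v \<in> V then \<theta> v else 0)" for v
  have "load V W \<theta>' v = load V W \<theta> v" for v
    by (rule load_cong) (simp add: \<theta>'_def)
  then have st': "stable V W \<theta>'"
    using st unfolding stable_iff_best_response[OF wm] by (simp add: \<theta>'_def)
  have "(\<Sum>v\<in>V. \<theta>' v) = (\<Sum>v\<in>V. \<bar>\<theta>' v\<bar>)"
    using stable_bounds(1)[OF wm st'] by (intro sum.cong) auto
  moreover have "(\<Sum>v\<in>V. \<bar>\<theta>' v\<bar>) = (\<Sum>v\<in>V. \<bar>\<theta> v\<bar>)"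
    by (intro sum.cong) (auto simp: \<theta>'_def)
  moreover have "bdd_below ?C"
    by (rule bdd_belowI[of _ 0]) (auto intro: sum_nonneg)
  then have "OPT_stable V W \<le> (\<Sum>v\<in>V. \<bar>\<theta>' v\<bar>)"
    unfolding OPT_stable_def using st' by (intro cInf_lower) auto
  ultimately show ?thesis
    using st' less by (intro exI[of _ \<theta>']) (simp add: \<theta>'_def)
qed

lemma exists_mixture_parameters:
  assumes wm: "weight_matrix V W" and n: "n = card V" and less: "OPT_IR V W < OPT_stable V W"
  obtains \<theta> \<epsilon> where "stable V W \<theta>" "\<forall>v. v \<notin> V \<longrightarrow> \<theta> v = 0" "0 < slack V W \<theta>"
    "0 < \<epsilon>" "\<epsilon> < 1" "\<epsilon> * real n \<le> (1 - \<epsilon>) * slack V W \<theta>"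
    "\<epsilon> + (1 - \<epsilon>) * (\<Sum>v\<in>V. \<theta> v) < OPT_stable V W"
proof -
  let ?OPT = "OPT_stable V W"
  obtain \<tau> where \<tau>: "feasible V W \<tau>" "\<forall>v\<in>V. \<tau> v \<le> 1" "(\<Sum>v\<in>V. \<tau> v) < ?OPT"
    using OPT_IR_less_imp_witness[OF wm less] by blast
  obtain \<theta>\<^sub>1 where "?OPT \<le> (\<Sum>v\<in>V. \<theta>\<^sub>1 v)"
    using OPT_stable_approx[OF wm, of 1] by auto
  then have "V \<noteq> {}" using \<tau>(3) by auto
  then have "1 \<le> (\<Sum>v\<in>V. \<tau> v)" and "0 < real n"
    using feasible_sum_ge_one[OF wm _ \<tau>(1)] n wm by (auto simp: weight_matrix_def card_gt_0_iff)
  define \<delta> where "\<delta> = ?OPT - (\<Sum>v\<in>V. \<tau> v)"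
  define \<epsilon> where "\<epsilon> = \<delta> / (\<delta> + n)"
  have "0 < \<delta>" "1 < ?OPT" using \<tau>(3) \<open>1 \<le> (\<Sum>v\<in>V. \<tau> v)\<close> by (auto simp: \<delta>_def)
  then have \<epsilon>: "0 < \<epsilon>" "\<epsilon> < 1" "\<epsilon> * n = (1 - \<epsilon>) * \<delta>"
    using \<open>0 < real n\<close> by (auto simp: \<epsilon>_def field_simps)
  obtain \<theta> where st: "stable V W \<theta>" "\<forall>v. v \<notin> V \<longrightarrow> \<theta> v = 0"
    and near: "?OPT \<le> (\<Sum>v\<in>V. \<theta> v)" "(\<Sum>v\<in>V. \<theta> v) < ?OPT + \<epsilon> * (?OPT - 1)"
    using OPT_stable_approx[OF wm, of "\<epsilon> * (?OPT - 1)"] \<epsilon> \<open>1 < ?OPT\<close> by auto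
  have "feasible V W \<theta>"
    using st(1) unfolding stable_def by blast
  then have "\<delta> \<le> slack V W \<theta>"
    using sum_le_sum_plus_slack[OF wm _ \<tau>(1,2)] near(1) unfolding \<delta>_def by fastforce
  have "\<epsilon> * ?OPT \<le> \<epsilon> * (\<Sum>v\<in>V. \<theta> v)"
    using near(1) \<epsilon>(1) by simp
  then have "\<epsilon> + (1 - \<epsilon>) * (\<Sum>v\<in>V. \<theta> v) < ?OPT"
    using near(2) by (simp add: algebra_simps)
  moreover have "\<epsilon> * real n \<le> (1 - \<epsilon>) * slack V W \<theta>"
    using \<epsilon> \<open>\<delta> \<le> slack V W \<theta>\<close> by (simp add: mult_left_mono)
  ultimately show ?thesis
    using that st \<epsilon>(1,2) \<open>0 < \<delta>\<close> \<open>\<delta> \<le> slack V W \<theta>\<close> by simp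
qed

theorem theorem1p4:
  fixes V :: "'v set" and W :: "'v \<Rightarrow> 'v \<Rightarrow> real" and n :: nat
  assumes "weight_matrix V W"
    and "n = card V"
    and "OPT_IR V W < OPT_stable V W"
  shows "\<exists>(Sig :: real set) \<phi>. signaling_scheme n V Sig \<phi> \<and> card Sig \<le> n + 1 \<and>
           persuasive n V W Sig \<phi> \<and> cost n V \<phi> < OPT_stable V W"
proof -
  obtain \<theta> \<epsilon> where st: "stable V W \<theta>" "\<forall>v. v \<notin> V \<longrightarrow> \<theta> v = 0"
    and slack: "0 < slack V W \<theta>"
    and \<epsilon>: "0 < \<epsilon>" "\<epsilon> < 1" "\<epsilon> * real n \<le> (1 - \<epsilon>) * slack V W \<theta>"
    and cheap: "\<epsilon> + (1 - \<epsilon>) * (\<Sum>v\<in>V. \<theta> v) < OPT_stable V W"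
    using exists_mixture_parameters[OF assms] .
  obtain v\<^sub>0 where "v\<^sub>0 \<in> V"
    using slack unfolding slack_def by fastforce
  have idle: "0 \<in> \<theta> ` V"
    using stable_slack_pos_imp_idle[OF assms(1) st(1) slack] .
  have "card (insert 1 (\<theta> ` V)) \<le> n + 1"
    using card_image_le[of V \<theta>] assms(1,2)
    by (intro card_insert_le_m1) (auto simp: weight_matrix_def)
  then show ?thesis
    using mixture_signaling_scheme[OF assms(1) st \<open>v\<^sub>0 \<in> V\<close> idle]
      mixture_persuasive[OF assms(1,2) st \<open>v\<^sub>0 \<in> V\<close> idle _ _ \<epsilon>(3)]
      cost_mixture[OF assms(1,2) st(1) \<open>v\<^sub>0 \<in> V\<close>] \<epsilon> cheap
    by (intro exI conjI) auto
qed

end
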